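(* Let $\overrightarrow{W}$ be a Morse sequence on a simplicial complex $K$. Then there exists an arranged Morse sequence $\overrightarrow{V}$ on $K$ such that $\overrightarrow{W}$ and $\overrightarrow{V}$ are equivalent.
   Context: A simplicial complex $K$ is a finite collection of non-empty finite sets closed under taking non-empty subsets; $\dim\sigma=|\sigma|-1$. A pair $(\sigma,\tau)$ with $\sigma\subsetneq\tau$ is a free pair for $K$ if $\tau$ is the only simplex other than $\sigma$ containing $\sigma$; $K$ is then an elementary expansion of $K\setminus\{\sigma,\tau\}$. If $\nu$ is a facet (maximal simplex) of $K$, $K$ is an elementary filling of $K\setminus\{\nu\}$. A Morse sequence on $K$ is a sequence $\langle\emptyset=K_0,\dots,K_k=K\rangle$ with each $K_i$ an elementary expansion or filling of $K_{i-1}$. For each $i$, set $\kappa_i=\nu$ if $K_i=K_{i-1}\cup\{\nu\}$ is a filling ($\nu$ is then critical), and $\kappa_i=(\sigma,\tau)$ if $K_i=K_{i-1}\cup\{\sigma,\tau\}$ is an expansion with $\sigma\subset\tau$ ($(\sigma,\tau)$ is then a regular pair). The dimension of a critical simplex is its dimension; the dimension of a regular pair $(\sigma,\tau)$ is $\dim\tau$. The Morse sequence is arranged if for each $i\in[1,k-1]$: $\dim(\kappa_i)\le\dim(\kappa_{i+1})$, and $\dim(\kappa_i)<\dim(\kappa_{i+1})$ whenever $\kappa_i$ is a critical simplex and $\kappa_{i+1}$ is a regular pair. Two Morse sequences on $K$ are equivalent if they have the same set of regular pairs (gradient vector field). *)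

theory Defs
  imports Main
begin

definition simplicial_complex :: "'a set set \<Rightarrow> bool" where
  "simplicial_complex K \<longleftrightarrow> finite K \<and> (\<forall>\<sigma>\<in>K. finite \<sigma> \<and> \<sigma> \<noteq> {}) \<and>
     (\<forall>\<sigma>\<in>K. \<forall>\<tau>. \<tau> \<subseteq> \<sigma> \<and> \<tau> \<noteq> {} \<longrightarrow> \<tau> \<in> K)"

definition sdim :: "'a set \<Rightarrow> nat" where
  "sdim \<sigma> = card \<sigma> - 1"

definition free_pair :: "'a set set \<Rightarrow> 'a set \<Rightarrow> 'a set \<Rightarrow> bool" where
  "free_pair K \<sigma> \<tau> \<longleftrightarrow> \<sigma> \<in> K \<and> \<tau> \<in> K \<and> \<sigma> \<subset> \<tau> \<and> (\<forall>\<nu>\<in>K. \<sigma> \<subseteq> \<nu> \<longrightarrow> \<nu> = \<sigma> \<or> \<nu> = \<tau>)"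

definition facet :: "'a set set \<Rightarrow> 'a set \<Rightarrow> bool" where
  "facet K \<nu> \<longleftrightarrow> \<nu> \<in> K \<and> (\<forall>\<mu>\<in>K. \<nu> \<subseteq> \<mu> \<longrightarrow> \<mu> = \<nu>)"

datatype 'a kappa = is_Crit: Crit "'a set" | is_Reg: Reg "'a set" "'a set"

text \<open>elem_step L K k: K is an elementary expansion (k = Reg sigma tau) or an
  elementary filling (k = Crit nu) of L.\<close>
fun elem_step :: "'a set set \<Rightarrow> 'a set set \<Rightarrow> 'a kappa \<Rightarrow> bool" where
  "elem_step L K (Reg \<sigma> \<tau>) \<longleftrightarrow> free_pair K \<sigma> \<tau> \<and> L = K - {\<sigma>, \<tau>}"
| "elem_step L K (Crit \<nu>) \<longleftrightarrow> facet K \<nu> \<and> L = K - {\<nu>}"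

fun kdim :: "'a kappa \<Rightarrow> nat" where
  "kdim (Crit \<nu>) = sdim \<nu>"
| "kdim (Reg \<sigma> \<tau>) = sdim \<tau>"

definition morse_sequence :: "'a set set \<Rightarrow> 'a set set list \<Rightarrow> bool" where
  "morse_sequence K Ks \<longleftrightarrow> Ks \<noteq> [] \<and> hd Ks = {} \<and> last Ks = K \<and>
     (\<forall>L\<in>set Ks. simplicial_complex L) \<and>
     (\<forall>i. 0 < i \<and> i < length Ks \<longrightarrow> (\<exists>k. elem_step (Ks ! (i - 1)) (Ks ! i) k))"

definition arranged :: "'a set set list \<Rightarrow> bool" where
  "arranged Ks \<longleftrightarrow> (\<forall>i k k'. 0 < i \<and> i + 1 < length Ks \<and>
      elem_step (Ks ! (i - 1)) (Ks ! i) k \<and> elem_step (Ks ! i) (Ks ! (i + 1)) k' \<longrightarrow>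
      kdim k \<le> kdim k' \<and> (is_Crit k \<and> is_Reg k' \<longrightarrow> kdim k < kdim k'))"

definition regular_pairs :: "'a set set list \<Rightarrow> ('a set \<times> 'a set) set" where
  "regular_pairs Ks = {(\<sigma>, \<tau>). \<exists>i. 0 < i \<and> i < length Ks \<and> elem_step (Ks ! (i - 1)) (Ks ! i) (Reg \<sigma> \<tau>)}"

definition equivalent_morse :: "'a set set list \<Rightarrow> 'a set set list \<Rightarrow> bool" where
  "equivalent_morse W V \<longleftrightarrow> regular_pairs W = regular_pairs V"

end

theory Submission
  imports Defs
begin

(* A Morse sequence is determined by its list of steps kappa_1, ..., kappa_k, and such a list
   comes from a Morse sequence on K exactly when its simplices partition K, every regular pair
   (sigma, tau) has card tau = card sigma + 1, and no step contributes a simplex that is a face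
   of a simplex contributed by an earlier step.  Sort the steps stably by the key 2 dim tau for
   a pair (sigma, tau) and 2 dim nu + 1 for a critical nu.  A step contributing a face of a
   simplex of another step has at most the key of that step, so stable sorting never moves it
   behind; the sorted list is again a Morse sequence on K, it has the same regular pairs, and
   its keys increase, which is the arranged condition. *)

lemma simplicial_complex_simplex:
  "simplicial_complex M \<Longrightarrow> \<sigma> \<in> M \<Longrightarrow> finite \<sigma> \<and> \<sigma> \<noteq> {}"
  by (simp add: simplicial_complex_def)

lemma simplicial_complex_face:
  "simplicial_complex M \<Longrightarrow> \<sigma> \<in> M \<Longrightarrow> \<tau> \<subseteq> \<sigma> \<Longrightarrow> \<tau> \<noteq> {} \<Longrightarrow> \<tau> \<in> M"
  unfolding simplicial_complex_def by blast

lemma simplicial_complex_downward_closed_subset: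
  assumes "simplicial_complex K" "M \<subseteq> K"
    and "\<And>\<sigma> \<tau>. \<sigma> \<in> M \<Longrightarrow> \<tau> \<subseteq> \<sigma> \<Longrightarrow> \<tau> \<noteq> {} \<Longrightarrow> \<tau> \<in> M"
  shows "simplicial_complex M"
  unfolding simplicial_complex_def
proof (intro conjI ballI allI impI)
  show "finite M" using assms(1) finite_subset[OF assms(2)] by (simp add: simplicial_complex_def)
  fix \<sigma> assume "\<sigma> \<in> M"
  then show "finite \<sigma>" "\<sigma> \<noteq> {}" using simplicial_complex_simplex[OF assms(1)] assms(2) by auto
  show "\<tau> \<in> M" if "\<tau> \<subseteq> \<sigma> \<and> \<tau> \<noteq> {}" for \<tau> using assms(3) \<open>\<sigma> \<in> M\<close> that by blast
qed

lemma free_pair_card: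
  assumes "simplicial_complex M" "free_pair M \<sigma> \<tau>"
  shows "card \<tau> = Suc (card \<sigma>)"
proof -
  have st: "\<sigma> \<subset> \<tau>" "\<tau> \<in> M" using assms(2) by (auto simp: free_pair_def)
  then obtain a where a: "a \<in> \<tau>" "a \<notin> \<sigma>" by blast
  have "insert a \<sigma> \<subseteq> \<tau>" using st(1) a(1) by blast
  then have "insert a \<sigma> \<in> M" using simplicial_complex_face[OF assms(1) st(2)] by simp
  then have \<tau>: "\<tau> = insert a \<sigma>" using assms(2) a(2) unfolding free_pair_def by blast
  have "finite \<sigma>" using simplicial_complex_simplex[OF assms(1) st(2)] st(1) finite_subset by blast
  then show ?thesis using a(2) unfolding \<tau> by simp
qed

lemma sdim_psubset:
  assumes "finite y" "x \<noteq> {}" "x \<subset> y"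
  shows "sdim x < sdim y"
proof -
  have "0 < card x" using assms by (auto simp: card_gt_0_iff finite_subset)
  moreover have "card x < card y" using assms by (simp add: psubset_card_mono)
  ultimately show ?thesis by (simp add: sdim_def)
qed

lemma sorted_wrt_mem_cases:
  "sorted_wrt P xs \<Longrightarrow> x \<in> set xs \<Longrightarrow> y \<in> set xs \<Longrightarrow> x \<noteq> y \<Longrightarrow> P x y \<or> P y x"
  by (induction xs) auto

lemma sorted_wrt_insort_key:
  assumes "sorted_wrt P xs" "\<forall>y\<in>set xs. P x y" "\<forall>y\<in>set xs. f y < f x \<longrightarrow> P y x"
  shows "sorted_wrt P (insort_key f x xs)"
  using assms by (induction xs) (auto simp: set_insort_key)

lemma sorted_wrt_sort_key:
  assumes "sorted_wrt P xs" "\<And>x y. x \<in> set xs \<Longrightarrow> y \<in> set xs \<Longrightarrow> f x < f y \<Longrightarrow> P x y"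
  shows "sorted_wrt P (sort_key f xs)"
  using assms by (induction xs) (auto intro!: sorted_wrt_insort_key)

fun elems :: "'a kappa \<Rightarrow> 'a set set" where
  "elems (Crit \<nu>) = {\<nu>}"
| "elems (Reg \<sigma> \<tau>) = {\<sigma>, \<tau>}"

fun codim_one :: "'a kappa \<Rightarrow> bool" where
  "codim_one (Crit \<nu>) \<longleftrightarrow> True"
| "codim_one (Reg \<sigma> \<tau>) \<longleftrightarrow> \<sigma> \<subset> \<tau> \<and> card \<tau> = Suc (card \<sigma>)"

lemma elem_step_elems: "elem_step L M k \<Longrightarrow> elems k \<subseteq> M \<and> L = M - elems k"
  by (cases k) (auto simp: free_pair_def facet_def)

lemma elem_step_unique:
  assumes "elem_step L M k" "elem_step L M k'"
  shows "k = k'"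
proof -
  have "elems k = elems k'"
    using elem_step_elems[OF assms(1)] elem_step_elems[OF assms(2)] by blast
  moreover have "\<sigma> \<subset> \<tau>" if "Reg \<sigma> \<tau> \<in> {k, k'}" for \<sigma> \<tau>
    using assms that by (auto simp: free_pair_def)
  ultimately show ?thesis
    by (cases k; cases k') (auto simp: doubleton_eq_iff)
qed

definition step_complex :: "'a kappa list \<Rightarrow> nat \<Rightarrow> 'a set set" where
  "step_complex ks n = \<Union> (elems ` set (take n ks))"

definition complex_sequence :: "'a kappa list \<Rightarrow> 'a set set list" where
  "complex_sequence ks = map (step_complex ks) [0..<Suc (length ks)]"

lemma mem_step_complex_iff:
  "y \<in> step_complex ks n \<longleftrightarrow> (\<exists>j<n. j < length ks \<and> y \<in> elems (ks ! j))"
  unfolding step_complex_def by (force simp: in_set_conv_nth)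

lemma step_complex_0 [simp]: "step_complex ks 0 = {}"
  by (simp add: step_complex_def)

lemma step_complex_Suc: "i < length ks \<Longrightarrow> step_complex ks (Suc i) = step_complex ks i \<union> elems (ks ! i)"
  by (auto simp: step_complex_def take_Suc_conv_app_nth)

lemma step_complex_mono: "m \<le> n \<Longrightarrow> step_complex ks m \<subseteq> step_complex ks n"
  unfolding step_complex_def by (intro Union_mono image_mono set_take_subset_set_take)

lemma step_complex_length: "step_complex ks (length ks) = \<Union> (elems ` set ks)"
  by (simp add: step_complex_def)

lemma length_complex_sequence [simp]: "length (complex_sequence ks) = Suc (length ks)"
  by (simp add: complex_sequence_def)

lemma nth_complex_sequence: "n \<le> length ks \<Longrightarrow> complex_sequence ks ! n = step_complex ks n"
  by (simp add: complex_sequence_def del: upt_Suc)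

definition step_below :: "'a kappa \<Rightarrow> 'a kappa \<Rightarrow> bool" where
  "step_below k k' \<longleftrightarrow> (\<exists>x\<in>elems k. \<exists>y\<in>elems k'. x \<subset> y)"

definition may_precede :: "'a kappa \<Rightarrow> 'a kappa \<Rightarrow> bool" where
  "may_precede k k' \<longleftrightarrow> disjnt (elems k) (elems k') \<and> \<not> step_below k' k"

definition morse_steps :: "'a set set \<Rightarrow> 'a kappa list \<Rightarrow> bool" where
  "morse_steps K ks \<longleftrightarrow>
     (\<forall>k\<in>set ks. codim_one k) \<and> sorted_wrt may_precede ks \<and> \<Union> (elems ` set ks) = K"

lemma morse_sequence_obtain_steps:
  assumes "morse_sequence K W"
  obtains ks where "W = complex_sequence ks"
    and "\<And>i. i < length ks \<Longrightarrow> elem_step (step_complex ks i) (step_complex ks (Suc i)) (ks ! i)"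
proof -
  obtain n where n: "length W = Suc n" using assms unfolding morse_sequence_def by (cases W) auto
  have "\<exists>k. elem_step (W ! i) (W ! Suc i) k" if "i < n" for i
    using assms that n unfolding morse_sequence_def by (metis diff_Suc_1 Suc_mono zero_less_Suc)
  then obtain f where f: "\<And>i. i < n \<Longrightarrow> elem_step (W ! i) (W ! Suc i) (f i)" by metis
  define ks where "ks = map f [0..<n]"
  have W_nth: "W ! i = step_complex ks i" if "i \<le> n" for i
    using that
  proof (induction i)
    case 0
    have "W ! 0 = hd W" using n by (cases W) auto
    then show ?case using assms by (simp add: morse_sequence_def)
  next
    case (Suc i)
    then have "i < n" by simp
    then have "W ! Suc i = W ! i \<union> elems (f i)" using elem_step_elems[OF f] by blast
    then show ?case using Suc.IH \<open>i < n\<close> by (simp add: ks_def step_complex_Suc)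
  qed
  show ?thesis
  proof
    show "W = complex_sequence ks"
      by (rule nth_equalityI) (simp_all add: ks_def n nth_complex_sequence W_nth)
    show "elem_step (step_complex ks i) (step_complex ks (Suc i)) (ks ! i)" if "i < length ks" for i
      using that f[of i] W_nth[of i] W_nth[of "Suc i"] by (simp add: ks_def)
  qed
qed

lemma morse_steps_of_elem_steps:
  assumes "morse_sequence K (complex_sequence ks)"
    and steps: "\<And>i. i < length ks \<Longrightarrow> elem_step (step_complex ks i) (step_complex ks (Suc i)) (ks ! i)"
  shows "morse_steps K ks"
proof -
  have complex: "simplicial_complex (step_complex ks n)" if "n \<le> length ks" for n
    using assms(1) that nth_mem[of n "complex_sequence ks"]
    by (auto simp: morse_sequence_def nth_complex_sequence)
  have added: "elems (ks ! i) \<subseteq> step_complex ks (Suc i)" if "i < length ks" for i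
    using that by (simp add: step_complex_Suc)
  have face_not_later: "y \<notin> elems (ks ! j)"
    if ij: "i < j" "j < length ks" and x: "x \<in> elems (ks ! i)" and y: "y \<subseteq> x" for i j x y
  proof
    assume y_new: "y \<in> elems (ks ! j)"
    then have "y \<noteq> {}"
      using simplicial_complex_simplex[OF complex[of "Suc j"]] added[of j] ij by auto
    moreover have "x \<in> step_complex ks (Suc i)" using added[of i] ij x by auto
    ultimately have "y \<in> step_complex ks (Suc i)"
      using simplicial_complex_face[OF complex[of "Suc i"]] ij y by auto
    then have "y \<in> step_complex ks j" using step_complex_mono[of "Suc i" j ks] ij by auto
    then show False using elem_step_elems[OF steps[OF ij(2)]] y_new by blast
  qed
  have "may_precede (ks ! i) (ks ! j)" if "i < j" "j < length ks" for i j
    using face_not_later[OF that] unfolding may_precede_def step_below_def disjnt_def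
    by (meson disjoint_iff psubset_imp_subset subset_refl)
  then have "sorted_wrt may_precede ks" unfolding sorted_wrt_iff_nth_less by blast
  moreover have "codim_one k" if k: "k \<in> set ks" for k
  proof -
    obtain i where i: "i < length ks" "ks ! i = k"
      using k unfolding in_set_conv_nth by blast
    note step = steps[OF i(1), unfolded i(2)]
    show ?thesis
    proof (cases k)
      case (Reg \<sigma> \<tau>)
      have "simplicial_complex (step_complex ks (Suc i))" using complex i(1) by simp
      moreover have "free_pair (step_complex ks (Suc i)) \<sigma> \<tau>" using step unfolding Reg by simp
      ultimately show ?thesis unfolding Reg using free_pair_card by (auto simp: free_pair_def)
    qed simp
  qed
  moreover have "\<Union> (elems ` set ks) = K"
    using assms(1) by (simp add: morse_sequence_def complex_sequence_def step_complex_length)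
  ultimately show ?thesis unfolding morse_steps_def by blast
qed

lemma morse_steps_face_index:
  assumes "morse_steps K ks" "i < length ks" "j < length ks"
    and "x \<in> elems (ks ! i)" "y \<in> elems (ks ! j)" "y \<subseteq> x"
  shows "j \<le> i"
proof (rule ccontr)
  assume "\<not> j \<le> i"
  then have "may_precede (ks ! i) (ks ! j)"
    using assms(1,3) by (simp add: morse_steps_def sorted_wrt_iff_nth_less)
  then show False
    using assms(4-6) unfolding may_precede_def step_below_def disjnt_def by blast
qed

lemma step_complex_subset: "morse_steps K ks \<Longrightarrow> step_complex ks n \<subseteq> K"
  unfolding morse_steps_def step_complex_def by (auto dest: in_set_takeD)

lemma simplicial_complex_step_complex:
  assumes K: "simplicial_complex K" and ks: "morse_steps K ks"
  shows "simplicial_complex (step_complex ks n)"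
proof (rule simplicial_complex_downward_closed_subset[OF K step_complex_subset[OF ks]])
  fix \<sigma> \<tau> assume \<sigma>: "\<sigma> \<in> step_complex ks n" and \<tau>: "\<tau> \<subseteq> \<sigma>" "\<tau> \<noteq> {}"
  obtain i where i: "i < n" "i < length ks" "\<sigma> \<in> elems (ks ! i)"
    using \<sigma> unfolding mem_step_complex_iff by blast
  have "\<sigma> \<in> K" using \<sigma> step_complex_subset[OF ks] by blast
  then have "\<tau> \<in> K" using simplicial_complex_face[OF K] \<tau> by blast
  then obtain k where "k \<in> set ks" "\<tau> \<in> elems k" using ks by (auto simp: morse_steps_def)
  then obtain j where j: "j < length ks" "\<tau> \<in> elems (ks ! j)"
    unfolding in_set_conv_nth by blast
  have "j \<le> i" using morse_steps_face_index[OF ks i(2) j(1) i(3) j(2) \<tau>(1)] .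
  then show "\<tau> \<in> step_complex ks n" using i j unfolding mem_step_complex_iff by (auto intro!: exI[of _ j])
qed

lemma elem_step_step_complex:
  assumes K: "simplicial_complex K" and ks: "morse_steps K ks" and i: "i < length ks"
  shows "elem_step (step_complex ks i) (step_complex ks (Suc i)) (ks ! i)"
proof -
  have M: "step_complex ks (Suc i) = step_complex ks i \<union> elems (ks ! i)"
    using i by (rule step_complex_Suc)
  have new: "y \<notin> step_complex ks i" if y: "y \<in> elems (ks ! i)" for y
  proof
    assume "y \<in> step_complex ks i"
    then obtain j where j: "j < i" "y \<in> elems (ks ! j)" by (auto simp: mem_step_complex_iff)
    then have "i \<le> j" using morse_steps_face_index[OF ks _ i j(2) y] i by simp
    then show False using j(1) by simp
  qed
  have top: "\<mu> \<in> elems (ks ! i)"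
    if x: "x \<in> elems (ks ! i)" and \<mu>: "\<mu> \<in> step_complex ks (Suc i)" and sub: "x \<subseteq> \<mu>" for x \<mu>
  proof -
    obtain j where j: "j \<le> i" "\<mu> \<in> elems (ks ! j)"
      using \<mu> i by (auto simp: mem_step_complex_iff less_Suc_eq_le)
    then have "i \<le> j" using morse_steps_face_index[OF ks _ i j(2) x sub] i by simp
    then show ?thesis using j by simp
  qed
  show ?thesis
  proof (cases "ks ! i")
    case (Crit \<nu>)
    have "facet (step_complex ks (Suc i)) \<nu>" unfolding facet_def using M top[of \<nu>] Crit by auto
    moreover have "step_complex ks i = step_complex ks (Suc i) - {\<nu>}" using M new[of \<nu>] Crit by auto
    ultimately show ?thesis using Crit by simp
  next
    case (Reg \<sigma> \<tau>)
    have "codim_one (ks ! i)" using ks i by (simp add: morse_steps_def)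
    then have "\<sigma> \<subset> \<tau>" using Reg by simp
    then have "free_pair (step_complex ks (Suc i)) \<sigma> \<tau>"
      unfolding free_pair_def using M top[of \<sigma>] Reg by auto
    moreover have "step_complex ks i = step_complex ks (Suc i) - {\<sigma>, \<tau>}" using M new Reg by auto
    ultimately show ?thesis using Reg by simp
  qed
qed

lemma morse_sequence_complex_sequence:
  assumes K: "simplicial_complex K" and ks: "morse_steps K ks"
  shows "morse_sequence K (complex_sequence ks)"
  unfolding morse_sequence_def
proof (intro conjI allI impI ballI)
  show "complex_sequence ks \<noteq> []" by (simp add: complex_sequence_def)
  show "hd (complex_sequence ks) = {}" by (simp add: complex_sequence_def hd_map del: upt_Suc)
  show "last (complex_sequence ks) = K"
    using ks by (simp add: complex_sequence_def step_complex_length morse_steps_def)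
next
  fix L assume "L \<in> set (complex_sequence ks)"
  then show "simplicial_complex L"
    using simplicial_complex_step_complex[OF K ks] by (auto simp: complex_sequence_def)
next
  fix i assume i: "0 < i \<and> i < length (complex_sequence ks)"
  then have "elem_step (step_complex ks (i - 1)) (step_complex ks (Suc (i - 1))) (ks ! (i - 1))"
    by (intro elem_step_step_complex[OF K ks]) auto
  then show "\<exists>k. elem_step (complex_sequence ks ! (i - 1)) (complex_sequence ks ! i) k"
    using i by (auto simp: nth_complex_sequence)
qed

lemma elem_step_complex_sequence_iff:
  assumes K: "simplicial_complex K" and ks: "morse_steps K ks"
    and i: "0 < i" "i < length (complex_sequence ks)"
  shows "elem_step (complex_sequence ks ! (i - 1)) (complex_sequence ks ! i) k \<longleftrightarrow> k = ks ! (i - 1)"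
proof -
  have "elem_step (complex_sequence ks ! (i - 1)) (complex_sequence ks ! i) (ks ! (i - 1))"
    using elem_step_step_complex[OF K ks, of "i - 1"] i by (auto simp: nth_complex_sequence)
  then show ?thesis using elem_step_unique by blast
qed

lemma regular_pairs_complex_sequence:
  assumes K: "simplicial_complex K" and ks: "morse_steps K ks"
  shows "regular_pairs (complex_sequence ks) = {(\<sigma>, \<tau>). Reg \<sigma> \<tau> \<in> set ks}"
proof -
  let ?cs = "complex_sequence ks"
  have "(\<exists>i. 0 < i \<and> i < length ?cs \<and> elem_step (?cs ! (i - 1)) (?cs ! i) k) \<longleftrightarrow> k \<in> set ks" for k
  proof
    assume "\<exists>i. 0 < i \<and> i < length ?cs \<and> elem_step (?cs ! (i - 1)) (?cs ! i) k"
    then obtain i where "0 < i" "i < length ?cs" "k = ks ! (i - 1)"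
      using elem_step_complex_sequence_iff[OF K ks] by blast
    then show "k \<in> set ks" by simp
  next
    assume "k \<in> set ks"
    then obtain j where j: "j < length ks" "k = ks ! j" by (auto simp: in_set_conv_nth)
    then have "elem_step (?cs ! (Suc j - 1)) (?cs ! Suc j) k"
      using elem_step_complex_sequence_iff[OF K ks, of "Suc j"] by simp
    then show "\<exists>i. 0 < i \<and> i < length ?cs \<and> elem_step (?cs ! (i - 1)) (?cs ! i) k"
      using j(1) by (intro exI[of _ "Suc j"]) simp
  qed
  then show ?thesis unfolding regular_pairs_def by (simp del: elem_step.simps)
qed

(* Pairs of dimension d, then critical d-simplices, then pairs of dimension d + 1. *)
fun arrange_key :: "'a kappa \<Rightarrow> nat" where
  "arrange_key (Crit \<nu>) = 2 * sdim \<nu> + 1"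
| "arrange_key (Reg \<sigma> \<tau>) = 2 * sdim \<tau>"

lemma arrange_key_bounds:
  "codim_one k \<Longrightarrow> x \<in> elems k \<Longrightarrow> 2 * sdim x \<le> arrange_key k \<and> arrange_key k \<le> 2 * sdim x + 2"
  by (cases k) (auto simp: sdim_def)

lemma arrange_key_mono:
  assumes "simplicial_complex K" "elems k \<subseteq> K" "elems k' \<subseteq> K"
    and "codim_one k" "codim_one k'" "step_below k k'"
  shows "arrange_key k \<le> arrange_key k'"
proof -
  obtain x y where xy: "x \<in> elems k" "y \<in> elems k'" "x \<subset> y"
    using assms(6) by (auto simp: step_below_def)
  have "finite y" "x \<noteq> {}" using assms(1-3) xy by (auto simp: simplicial_complex_def)
  then have "sdim x < sdim y" using xy(3) by (rule sdim_psubset)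
  then show ?thesis using arrange_key_bounds[OF assms(4) xy(1)] arrange_key_bounds[OF assms(5) xy(2)] by linarith
qed

lemma morse_steps_sort_key:
  assumes "simplicial_complex K" "morse_steps K ks"
  shows "morse_steps K (sort_key arrange_key ks)"
proof -
  have codim: "\<forall>k\<in>set ks. codim_one k" and sorted: "sorted_wrt may_precede ks"
    and K: "\<Union> (elems ` set ks) = K"
    using assms(2) by (auto simp: morse_steps_def)
  have "may_precede k k'" if "k \<in> set ks" "k' \<in> set ks" "arrange_key k < arrange_key k'" for k k'
  proof -
    have "may_precede k k' \<or> may_precede k' k"
      using sorted_wrt_mem_cases[OF sorted that(1,2)] that(3) by blast
    moreover have "\<not> step_below k' k"
      using arrange_key_mono[OF assms(1), of k' k] that codim K by fastforce
    ultimately show ?thesis by (auto simp: may_precede_def disjnt_sym)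
  qed
  then have "sorted_wrt may_precede (sort_key arrange_key ks)"
    using sorted by (intro sorted_wrt_sort_key)
  then show ?thesis using assms(2) by (simp add: morse_steps_def)
qed

lemma kdim_mono_arrange_key:
  "arrange_key k \<le> arrange_key k' \<Longrightarrow>
     kdim k \<le> kdim k' \<and> (is_Crit k \<and> is_Reg k' \<longrightarrow> kdim k < kdim k')"
  by (cases k; cases k') auto

lemma arranged_complex_sequence:
  assumes K: "simplicial_complex K" and ks: "morse_steps K ks"
    and sorted: "sorted (map arrange_key ks)"
  shows "arranged (complex_sequence ks)"
  unfolding arranged_def
proof (intro allI impI)
  fix i k k'
  assume steps: "0 < i \<and> i + 1 < length (complex_sequence ks) \<and>
    elem_step (complex_sequence ks ! (i - 1)) (complex_sequence ks ! i) k \<and>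
    elem_step (complex_sequence ks ! i) (complex_sequence ks ! (i + 1)) k'"
  then have i: "0 < i" "i < length ks" by auto
  have "k = ks ! (i - 1)" using steps elem_step_complex_sequence_iff[OF K ks, of i] by auto
  moreover have "k' = ks ! i" using steps elem_step_complex_sequence_iff[OF K ks, of "Suc i"] by auto
  moreover have "arrange_key (ks ! (i - 1)) \<le> arrange_key (ks ! i)"
    using sorted_nth_mono[OF sorted, of "i - 1" i] i by simp
  ultimately show "kdim k \<le> kdim k' \<and> (is_Crit k \<and> is_Reg k' \<longrightarrow> kdim k < kdim k')"
    by (simp add: kdim_mono_arrange_key)
qed

theorem theorem5:
  fixes K :: "'a set set" and W :: "'a set set list"
  assumes "simplicial_complex K"
    and "morse_sequence K W"
  shows "\<exists>V. morse_sequence K V \<and> arranged V \<and> equivalent_morse W V"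
proof -
  obtain ks where W: "W = complex_sequence ks"
    and steps: "\<And>i. i < length ks \<Longrightarrow> elem_step (step_complex ks i) (step_complex ks (Suc i)) (ks ! i)"
    using morse_sequence_obtain_steps[OF assms(2)] by blast
  have ks: "morse_steps K ks" using morse_steps_of_elem_steps assms(2) steps unfolding W by blast
  define V where "V = complex_sequence (sort_key arrange_key ks)"
  have vs: "morse_steps K (sort_key arrange_key ks)" using morse_steps_sort_key[OF assms(1) ks] .
  have "morse_sequence K V" unfolding V_def using morse_sequence_complex_sequence[OF assms(1) vs] .
  moreover have "arranged V"
    unfolding V_def using arranged_complex_sequence[OF assms(1) vs] by (simp add: sorted_sort_key)
  moreover have "equivalent_morse W V"
    unfolding equivalent_morse_def W V_def
    by (simp add: regular_pairs_complex_sequence[OF assms(1) ks] regular_pairs_complex_sequence[OF assms(1) vs])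
  ultimately show ?thesis by blast
qed

end
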